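(* Let $\nu$ be a vector norm on $\mathbb{R}^n$, let $H=\{x\in\mathbb{R}^n: e^Tx=0\}$ where $e=(1,\ldots,1)^T$, and let $P_1,P_2,\ldots$ be a sequence of $n\times n$ column stochastic matrices. Suppose that $\sum_{i=1}^\infty(\max(\nu^0_H(P_i),1)-1)$ converges and that there is a subsequence $P_{i_1},P_{i_2},\ldots$ for which $\sum_{j=1}^\infty(1-\min(\nu^0_H(P_{i_j}),1))$ diverges. Then all general products formed from the sequence $P_1,P_2,\ldots$ are weakly ergodic.
   Context: A column stochastic matrix is a nonnegative matrix each of whose columns sums to $1$; $H$ is invariant under every such matrix. The coefficient of ergodicity associated with $\nu$ is $\nu^0_H(P)=\sup_{0\ne x\in H}\nu(Px)/\nu(x)$. General products: given a permutation $\sigma$ of the positive integers, set $B_i=P_{\sigma(i)}$; for an integer $p\ge0$ and each $r\ge1$, $C_{p,r}$ is a product of $B_{p+1},\ldots,B_{p+r}$, each used exactly once, in some order (chosen arbitrarily and independently for each $r$). All general products are weakly ergodic if for every such choice of $\sigma$, $p$ and orders, $\lim_{r\to\infty}C_{p,r}x=0$ for all $x\in H$. *)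

theory Defs
  imports "HOL-Analysis.Analysis"
begin

definition is_vector_norm :: "(real^'n \<Rightarrow> real) \<Rightarrow> bool" where
  "is_vector_norm \<nu> \<longleftrightarrow>
     (\<forall>x. 0 \<le> \<nu> x) \<and> (\<forall>x. \<nu> x = 0 \<longleftrightarrow> x = 0) \<and>
     (\<forall>c x. \<nu> (c *\<^sub>R x) = \<bar>c\<bar> * \<nu> x) \<and>
     (\<forall>x y. \<nu> (x + y) \<le> \<nu> x + \<nu> y)"

definition col_stochastic :: "real^'n^'n \<Rightarrow> bool" where
  "col_stochastic P \<longleftrightarrow> (\<forall>i j. 0 \<le> P $ i $ j) \<and> (\<forall>j. (\<Sum>i\<in>UNIV. P $ i $ j) = 1)"

definition Hspace :: "(real^'n) set" where
  "Hspace = {x. (\<Sum>i\<in>UNIV. x $ i) = 0}"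

definition coeff_erg :: "(real^'n \<Rightarrow> real) \<Rightarrow> real^'n^'n \<Rightarrow> real" where
  "coeff_erg \<nu> P = (SUP x \<in> Hspace - {0}. \<nu> (P *v x) / \<nu> x)"

definition ordered_prod :: "(nat \<Rightarrow> real^'n^'n) \<Rightarrow> nat list \<Rightarrow> real^'n^'n" where
  "ordered_prod B ks = foldr (\<lambda>k M. B k ** M) ks (mat 1)"

text \<open>All general products are weakly ergodic (0-based indexing: B_i = P (sigma i),
  C_{p,r} is the product of B_p, ..., B_{p+r-1} in the order given by ord r).\<close>
definition general_products_weakly_ergodic :: "(nat \<Rightarrow> real^'n^'n) \<Rightarrow> bool" where
  "general_products_weakly_ergodic P \<longleftrightarrow>
     (\<forall>\<sigma> p ord. bij \<sigma> \<longrightarrow> (\<forall>r. bij_betw (ord r) {0..<r} {p..<p+r}) \<longrightarrow>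
        (\<forall>x\<in>Hspace.
           (\<lambda>r. ordered_prod (\<lambda>i. P (\<sigma> i)) (map (ord r) [0..<r]) *v x) \<longlonglongrightarrow> 0))"

end

theory Submission
  imports Defs
begin

text \<open>
  On the invariant subspace H each factor B shrinks \<nu> by at most its coefficient of ergodicity
  c(B), so C_{p,r} x is bounded in \<nu> by the product of the c's of its factors times \<nu>(x), and
  since c \<le> exp(c - 1) this product is at most exp of the window sum of c - 1 over the
  indices p, ..., p+r-1. The positive parts of c - 1 contribute at most the finite total
  of the first series. The negative parts diverge along the subsequence, and because \<sigma>
  is onto, any finitely many terms of that subsequence lie in every long enough window, so the
  exponent tends to -\<infinity>. Finally \<nu> dominates a multiple of the Euclidean norm, by compactness
  of the unit sphere.
\<close>

lemma vector_norm_nonneg: "is_vector_norm \<nu> \<Longrightarrow> 0 \<le> \<nu> x"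
  unfolding is_vector_norm_def by blast

lemma vector_norm_eq_0_iff: "is_vector_norm \<nu> \<Longrightarrow> \<nu> x = 0 \<longleftrightarrow> x = 0"
  unfolding is_vector_norm_def by blast

lemma vector_norm_scaleR: "is_vector_norm \<nu> \<Longrightarrow> \<nu> (c *\<^sub>R x) = \<bar>c\<bar> * \<nu> x"
  unfolding is_vector_norm_def by blast

lemma vector_norm_triangle: "is_vector_norm \<nu> \<Longrightarrow> \<nu> (x + y) \<le> \<nu> x + \<nu> y"
  unfolding is_vector_norm_def by blast

lemma vector_norm_zero: "is_vector_norm \<nu> \<Longrightarrow> \<nu> 0 = 0"
  by (simp add: vector_norm_eq_0_iff)

lemma vector_norm_pos: "is_vector_norm \<nu> \<Longrightarrow> x \<noteq> 0 \<Longrightarrow> 0 < \<nu> x"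
  using vector_norm_nonneg vector_norm_eq_0_iff by (metis less_le)

lemma vector_norm_minus_commute: "is_vector_norm \<nu> \<Longrightarrow> \<nu> (x - y) = \<nu> (y - x)"
  using vector_norm_scaleR[of \<nu> "- 1" "y - x"] by simp

lemma vector_norm_sum:
  assumes "is_vector_norm \<nu>"
  shows "\<nu> (\<Sum>i\<in>A. f i) \<le> (\<Sum>i\<in>A. \<nu> (f i))"
proof (induction A rule: infinite_finite_induct)
  case (insert a A)
  then show ?case
    using vector_norm_triangle[OF assms, of "f a" "sum f A"] by simp
qed (simp_all add: vector_norm_zero[OF assms])

lemma vector_norm_le_Basis:
  fixes \<nu> :: "real^'n \<Rightarrow> real"
  assumes "is_vector_norm \<nu>"
  shows "\<nu> x \<le> (\<Sum>b\<in>Basis. \<nu> b) * norm x"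
proof -
  have "\<nu> x = \<nu> (\<Sum>b\<in>Basis. (x \<bullet> b) *\<^sub>R b)"
    by (simp add: euclidean_representation)
  also have "\<dots> \<le> (\<Sum>b\<in>Basis. \<nu> ((x \<bullet> b) *\<^sub>R b))"
    by (rule vector_norm_sum[OF assms])
  also have "\<dots> = (\<Sum>b\<in>Basis. \<bar>x \<bullet> b\<bar> * \<nu> b)"
    by (simp add: vector_norm_scaleR[OF assms])
  also have "\<dots> \<le> (\<Sum>b\<in>Basis. norm x * \<nu> b)"
    by (intro sum_mono mult_right_mono Basis_le_norm vector_norm_nonneg[OF assms])
  also have "\<dots> = (\<Sum>b\<in>Basis. \<nu> b) * norm x"
    by (subst sum_distrib_right) (simp add: mult.commute)
  finally show ?thesis .
qed

lemma vector_norm_lipschitz: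
  fixes \<nu> :: "real^'n \<Rightarrow> real"
  assumes "is_vector_norm \<nu>"
  shows "(\<Sum>b\<in>Basis. \<nu> b)-lipschitz_on UNIV \<nu>"
proof (rule lipschitz_onI)
  fix x y :: "real^'n"
  have "\<nu> x \<le> \<nu> y + \<nu> (x - y)" "\<nu> y \<le> \<nu> x + \<nu> (y - x)"
    using vector_norm_triangle[OF assms, of y "x - y"] vector_norm_triangle[OF assms, of x "y - x"]
    by simp_all
  then have "dist (\<nu> x) (\<nu> y) \<le> \<nu> (x - y)"
    using vector_norm_minus_commute[OF assms, of x y] by (simp add: dist_real_def)
  also have "\<dots> \<le> (\<Sum>b\<in>Basis. \<nu> b) * dist x y"
    unfolding dist_norm by (rule vector_norm_le_Basis[OF assms])
  finally show "dist (\<nu> x) (\<nu> y) \<le> (\<Sum>b\<in>Basis. \<nu> b) * dist x y" .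
  show "0 \<le> (\<Sum>b\<in>Basis. \<nu> b)"
    by (intro sum_nonneg vector_norm_nonneg[OF assms])
qed

lemma vector_norm_ge_norm:
  fixes \<nu> :: "real^'n \<Rightarrow> real"
  assumes "is_vector_norm \<nu>"
  obtains k where "0 < k" "\<And>x. k * norm x \<le> \<nu> x"
proof -
  have "continuous_on (sphere 0 1) \<nu>"
    using lipschitz_on_continuous_on[OF vector_norm_lipschitz[OF assms]] continuous_on_subset by blast
  then obtain z :: "real^'n" where z: "z \<in> sphere 0 1" and min: "\<And>y. y \<in> sphere 0 1 \<Longrightarrow> \<nu> z \<le> \<nu> y"
    using continuous_attains_inf[of "sphere 0 1" \<nu>] by auto
  have "\<nu> z * norm x \<le> \<nu> x" for x
  proof (cases "x = 0")
    case False
    have "\<nu> z \<le> \<nu> ((1 / norm x) *\<^sub>R x)"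
      using min False by simp
    also have "\<dots> = \<nu> x / norm x"
      by (simp add: vector_norm_scaleR[OF assms])
    finally show ?thesis
      using False by (simp add: field_simps)
  qed (simp add: vector_norm_zero[OF assms])
  moreover have "z \<noteq> 0"
    using z by auto
  then have "0 < \<nu> z"
    by (rule vector_norm_pos[OF assms])
  ultimately show thesis
    using that by blast
qed

lemma vector_norm_Lim_null_comparison:
  fixes \<nu> :: "real^'n \<Rightarrow> real"
  assumes "is_vector_norm \<nu>" and "\<And>r. \<nu> (f r) \<le> g r" and "g \<longlonglongrightarrow> 0"
  shows "f \<longlonglongrightarrow> 0"
proof -
  obtain k where k: "0 < k" "\<And>x. k * norm x \<le> \<nu> x"
    using vector_norm_ge_norm[OF assms(1)] by blast
  have "\<forall>r. norm (f r) \<le> g r / k"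
  proof
    fix r
    have "k * norm (f r) \<le> g r"
      using k(2) assms(2) order_trans by blast
    then show "norm (f r) \<le> g r / k"
      using k(1) by (simp add: field_simps)
  qed
  then show ?thesis
    using Lim_null_comparison[OF always_eventually tendsto_divide_zero[OF assms(3)]] by blast
qed

lemma bdd_above_vector_norm_ratio:
  fixes \<nu> :: "real^'n \<Rightarrow> real"
  assumes "is_vector_norm \<nu>"
  shows "bdd_above ((\<lambda>x. \<nu> (A *v x) / \<nu> x) ` S)"
proof -
  define K where "K = (\<Sum>b\<in>Basis. \<nu> (b :: real^'n))"
  obtain k where k: "0 < k" "\<And>x. k * norm x \<le> \<nu> x"
    using vector_norm_ge_norm[OF assms] by blast
  obtain M where M: "0 < M" "\<And>x. norm (A *v x) \<le> norm x * M"
    using bounded_linear.pos_bounded[OF matrix_vector_mul_bounded_linear[of A]] by blast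
  have K: "0 \<le> K" "\<And>x. \<nu> x \<le> K * norm x"
    unfolding K_def by (intro sum_nonneg vector_norm_nonneg[OF assms] vector_norm_le_Basis[OF assms])+
  have "\<nu> (A *v x) / \<nu> x \<le> K * M / k" for x
  proof (cases "x = 0")
    case False
    have "\<nu> (A *v x) \<le> K * norm (A *v x)"
      by (rule K(2))
    also have "\<dots> \<le> K * (norm x * M)"
      using M(2) K(1) by (rule mult_left_mono)
    also have "\<dots> = (K * M / k) * (k * norm x)"
      using k(1) by simp
    also have "\<dots> \<le> (K * M / k) * \<nu> x"
      using K(1) M(1) k by (intro mult_left_mono) simp_all
    finally show ?thesis
      using vector_norm_pos[OF assms False] by (simp add: divide_simps)
  qed (use K(1) M(1) k(1) vector_norm_zero[OF assms] in simp)
  then show ?thesis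
    by (intro bdd_aboveI2)
qed

lemma coeff_erg_bound:
  fixes \<nu> :: "real^'n \<Rightarrow> real"
  assumes "is_vector_norm \<nu>" and "x \<in> Hspace"
  shows "\<nu> (A *v x) \<le> coeff_erg \<nu> A * \<nu> x"
proof (cases "x = 0")
  case False
  have "\<nu> (A *v x) / \<nu> x \<le> coeff_erg \<nu> A"
    unfolding coeff_erg_def
    using assms(2) False by (intro cSUP_upper bdd_above_vector_norm_ratio[OF assms(1)]) simp
  then show ?thesis
    using vector_norm_pos[OF assms(1) False] by (simp add: divide_simps mult.commute)
qed (simp add: vector_norm_zero[OF assms(1)])

text \<open>If H = {0}, the supremum is taken over the empty set and is unspecified.\<close>
lemma coeff_erg_nonneg:
  fixes \<nu> :: "real^'n \<Rightarrow> real" and z :: "real^'n"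
  assumes "is_vector_norm \<nu>" and "z \<in> Hspace" and "z \<noteq> 0"
  shows "0 \<le> coeff_erg \<nu> A"
proof -
  have "0 \<le> \<nu> (A *v z) / \<nu> z"
    by (simp add: vector_norm_nonneg[OF assms(1)])
  also have "\<dots> \<le> coeff_erg \<nu> A"
    unfolding coeff_erg_def
    using assms(2,3) by (intro cSUP_upper bdd_above_vector_norm_ratio[OF assms(1)]) simp
  finally show ?thesis .
qed

lemma col_stochastic_Hspace:
  assumes "col_stochastic P" and "x \<in> Hspace"
  shows "P *v x \<in> Hspace"
proof -
  have "(\<Sum>i\<in>UNIV. (P *v x) $ i) = (\<Sum>i\<in>UNIV. \<Sum>j\<in>UNIV. P $ i $ j * x $ j)"
    by (simp add: matrix_vector_mult_def)
  also have "\<dots> = (\<Sum>j\<in>UNIV. (\<Sum>i\<in>UNIV. P $ i $ j) * x $ j)"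
    by (subst sum.swap) (simp add: sum_distrib_right)
  also have "\<dots> = 0"
    using assms unfolding col_stochastic_def Hspace_def by simp
  finally show ?thesis
    unfolding Hspace_def by simp
qed

lemma ordered_prod_Nil [simp]: "ordered_prod B [] = mat 1"
  by (simp add: ordered_prod_def)

lemma ordered_prod_Cons [simp]: "ordered_prod B (k # ks) = B k ** ordered_prod B ks"
  by (simp add: ordered_prod_def)

lemma ordered_prod_Hspace:
  assumes "\<And>k. col_stochastic (B k)" and "x \<in> Hspace"
  shows "ordered_prod B ks *v x \<in> Hspace"
  by (induction ks) (simp_all add: assms col_stochastic_Hspace flip: matrix_vector_mul_assoc)

lemma ordered_prod_bound:
  fixes \<nu> :: "real^'n \<Rightarrow> real"
  assumes "is_vector_norm \<nu>" and "\<And>k. col_stochastic (B k)" and "\<And>k. 0 \<le> coeff_erg \<nu> (B k)"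
    and "x \<in> Hspace"
  shows "\<nu> (ordered_prod B ks *v x) \<le> (\<Prod>k\<leftarrow>ks. coeff_erg \<nu> (B k)) * \<nu> x"
proof (induction ks)
  case (Cons k ks)
  let ?y = "ordered_prod B ks *v x"
  have "\<nu> (ordered_prod B (k # ks) *v x) = \<nu> (B k *v ?y)"
    by (simp flip: matrix_vector_mul_assoc)
  also have "\<dots> \<le> coeff_erg \<nu> (B k) * \<nu> ?y"
    using coeff_erg_bound[OF assms(1) ordered_prod_Hspace[OF assms(2,4)]] .
  also have "\<dots> \<le> coeff_erg \<nu> (B k) * ((\<Prod>k\<leftarrow>ks. coeff_erg \<nu> (B k)) * \<nu> x)"
    using Cons assms(3) by (rule mult_left_mono)
  finally show ?case
    by (simp add: mult.assoc)
qed (simp add: assms)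

lemma prod_le_exp_sum:
  fixes f :: "'a \<Rightarrow> real"
  assumes "\<And>k. k \<in> F \<Longrightarrow> 0 \<le> f k"
  shows "(\<Prod>k\<in>F. f k) \<le> exp (\<Sum>k\<in>F. f k - 1)"
proof (cases "finite F")
  case True
  have "(\<Prod>k\<in>F. f k) \<le> (\<Prod>k\<in>F. exp (f k - 1))"
  proof (intro prod_mono conjI)
    fix k
    show "f k \<le> exp (f k - 1)"
      using exp_ge_add_one_self[of "f k - 1"] by simp
  qed (rule assms)
  with True show ?thesis
    by (simp add: exp_sum)
qed simp

lemma ordered_prod_tendsto_zero:
  fixes \<nu> :: "real^'n \<Rightarrow> real"
  assumes "is_vector_norm \<nu>" and "\<And>k. col_stochastic (B k)" and "x \<in> Hspace"
    and "\<And>r. distinct (ks r)"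
    and "filterlim (\<lambda>r. \<Sum>k\<in>set (ks r). coeff_erg \<nu> (B k) - 1) at_bot sequentially"
  shows "(\<lambda>r. ordered_prod B (ks r) *v x) \<longlonglongrightarrow> 0"
proof (cases "x = 0")
  case False
  let ?c = "\<lambda>k. coeff_erg \<nu> (B k)"
  have c_nonneg: "0 \<le> ?c k" for k
    using coeff_erg_nonneg[OF assms(1,3) False] .
  have bound: "\<nu> (ordered_prod B (ks r) *v x) \<le> exp (\<Sum>k\<in>set (ks r). ?c k - 1) * \<nu> x" for r
  proof -
    have "\<nu> (ordered_prod B (ks r) *v x) \<le> (\<Prod>k\<in>set (ks r). ?c k) * \<nu> x"
      using ordered_prod_bound[OF assms(1,2) c_nonneg assms(3)]
      by (simp add: prod.distinct_set_conv_list[OF assms(4)])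
    also have "\<dots> \<le> exp (\<Sum>k\<in>set (ks r). ?c k - 1) * \<nu> x"
      using c_nonneg by (intro mult_right_mono prod_le_exp_sum vector_norm_nonneg[OF assms(1)])
    finally show ?thesis .
  qed
  have "(\<lambda>r. exp (\<Sum>k\<in>set (ks r). ?c k - 1)) \<longlonglongrightarrow> 0"
    using filterlim_compose[OF exp_at_bot assms(5)] .
  then have "(\<lambda>r. exp (\<Sum>k\<in>set (ks r). ?c k - 1) * \<nu> x) \<longlonglongrightarrow> 0"
    by (rule tendsto_mult_left_zero)
  then show ?thesis
    by (rule vector_norm_Lim_null_comparison[OF assms(1) bound])
qed simp

lemma window_sums_at_top:
  fixes d :: "nat \<Rightarrow> real"
  assumes "\<And>i. 0 \<le> d i" and "surj \<sigma>" and "inj s" and "\<not> summable (\<lambda>j. d (s j))"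
  shows "filterlim (\<lambda>r. \<Sum>k\<in>{p..<p+r}. d (\<sigma> k)) at_top sequentially"
  unfolding filterlim_at_top eventually_sequentially
proof
  fix Z :: real
  obtain J where J: "Z + (\<Sum>k<p. d (\<sigma> k)) < (\<Sum>j<J. d (s j))"
    using assms(1,4) summableI_nonneg_bounded[of "\<lambda>j. d (s j)"] by (meson linorder_not_less)
  define \<tau> where "\<tau> = inv \<sigma>"
  have \<sigma>_\<tau>: "\<sigma> (\<tau> i) = i" for i
    unfolding \<tau>_def using assms(2) by (simp add: surj_f_inv_f)
  have inj: "inj_on (\<lambda>j. \<tau> (s j)) {..<J}"
    using assms(3) by (intro inj_onI) (metis \<sigma>_\<tau> injD)
  obtain N where N: "(\<lambda>j. \<tau> (s j)) ` {..<J} \<subseteq> {..<N}"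
    using finite_nat_iff_bounded by blast
  show "\<exists>N. \<forall>r\<ge>N. Z \<le> (\<Sum>k\<in>{p..<p+r}. d (\<sigma> k))"
  proof (intro exI allI impI)
    fix r
    assume "N \<le> r"
    have "(\<Sum>j<J. d (s j)) = (\<Sum>k\<in>(\<lambda>j. \<tau> (s j)) ` {..<J}. d (\<sigma> k))"
      by (simp add: sum.reindex[OF inj] \<sigma>_\<tau>)
    also have "\<dots> \<le> (\<Sum>k<p+r. d (\<sigma> k))"
      using N \<open>N \<le> r\<close> assms(1) by (intro sum_mono2) auto
    also have "\<dots> = (\<Sum>k<p. d (\<sigma> k)) + (\<Sum>k\<in>{p..<p+r}. d (\<sigma> k))"
      by (simp add: atLeast0LessThan[symmetric] sum.atLeastLessThan_concat)
    finally show "Z \<le> (\<Sum>k\<in>{p..<p+r}. d (\<sigma> k))"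
      using J by linarith
  qed
qed

lemma window_sums_at_bot:
  fixes a :: "nat \<Rightarrow> real"
  assumes "summable (\<lambda>i. max (a i) 0)" and "inj \<sigma>"
    and "filterlim (\<lambda>r. \<Sum>k\<in>{p..<p+r}. max (- a (\<sigma> k)) 0) at_top sequentially"
  shows "filterlim (\<lambda>r. \<Sum>k\<in>{p..<p+r}. a (\<sigma> k)) at_bot sequentially"
proof -
  let ?M = "\<Sum>i. max (a i) 0"
  have "\<forall>r. - ?M + (\<Sum>k\<in>{p..<p+r}. max (- a (\<sigma> k)) 0) \<le> - (\<Sum>k\<in>{p..<p+r}. a (\<sigma> k))"
  proof
    fix r
    have "(\<Sum>k\<in>{p..<p+r}. max (a (\<sigma> k)) 0) = (\<Sum>i\<in>\<sigma> ` {p..<p+r}. max (a i) 0)"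
      using assms(2) by (simp add: sum.reindex inj_on_subset)
    also have "\<dots> \<le> ?M"
      using assms(1) by (intro sum_le_suminf) auto
    finally have "(\<Sum>k\<in>{p..<p+r}. max (a (\<sigma> k)) 0) \<le> ?M" .
    moreover have "(\<Sum>k\<in>{p..<p+r}. a (\<sigma> k))
        = (\<Sum>k\<in>{p..<p+r}. max (a (\<sigma> k)) 0) - (\<Sum>k\<in>{p..<p+r}. max (- a (\<sigma> k)) 0)"
      unfolding sum_subtractf[symmetric] by (rule sum.cong) (simp_all add: max_def)
    ultimately show "- ?M + (\<Sum>k\<in>{p..<p+r}. max (- a (\<sigma> k)) 0) \<le> - (\<Sum>k\<in>{p..<p+r}. a (\<sigma> k))"
      by linarith
  qed
  with filterlim_tendsto_add_at_top[OF tendsto_const assms(3)]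
  have "filterlim (\<lambda>r. - (\<Sum>k\<in>{p..<p+r}. a (\<sigma> k))) at_top sequentially"
    by (rule filterlim_at_top_mono[OF _ always_eventually])
  then show ?thesis
    unfolding filterlim_uminus_at_bot .
qed

theorem theorem4p3:
  fixes \<nu> :: "real^'n \<Rightarrow> real" and P :: "nat \<Rightarrow> real^'n^'n"
  assumes "is_vector_norm \<nu>"
    and "\<And>i. col_stochastic (P i)"
    and "summable (\<lambda>i. max (coeff_erg \<nu> (P i)) 1 - 1)"
    and "strict_mono s"
    and "\<not> summable (\<lambda>j. 1 - min (coeff_erg \<nu> (P (s j))) 1)"
  shows "general_products_weakly_ergodic P"
  unfolding general_products_weakly_ergodic_def
proof (intro allI impI ballI)
  fix \<sigma> :: "nat \<Rightarrow> nat" and p :: nat and ord and x :: "real^'n"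
  assume "bij \<sigma>" and ord: "\<forall>r. bij_betw (ord r) {0..<r} {p..<p+r}" and "x \<in> Hspace"
  let ?c = "\<lambda>i. coeff_erg \<nu> (P i)"
  have "filterlim (\<lambda>r. \<Sum>k\<in>{p..<p+r}. 1 - min (?c (\<sigma> k)) 1) at_top sequentially"
    using window_sums_at_top[of "\<lambda>i. 1 - min (?c i) 1" \<sigma> s p] assms(4,5) \<open>bij \<sigma>\<close>
    by (simp add: bij_is_surj strict_mono_imp_inj_on)
  moreover have "max (?c i - 1) 0 = max (?c i) 1 - 1" "max (1 - ?c i) 0 = 1 - min (?c i) 1" for i
    by (simp_all add: max_def min_def)
  ultimately have "filterlim (\<lambda>r. \<Sum>k\<in>{p..<p+r}. ?c (\<sigma> k) - 1) at_bot sequentially"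
    using window_sums_at_bot[of "\<lambda>i. ?c i - 1" \<sigma> p] assms(3) \<open>bij \<sigma>\<close> by (simp add: bij_is_inj)
  moreover have "set (map (ord r) [0..<r]) = {p..<p+r}" "distinct (map (ord r) [0..<r])" for r
    using ord by (simp_all add: bij_betw_def distinct_map)
  ultimately show "(\<lambda>r. ordered_prod (\<lambda>i. P (\<sigma> i)) (map (ord r) [0..<r]) *v x) \<longlonglongrightarrow> 0"
    using ordered_prod_tendsto_zero[of \<nu> "\<lambda>i. P (\<sigma> i)" x "\<lambda>r. map (ord r) [0..<r]"]
      assms(1,2) \<open>x \<in> Hspace\<close> by simp
qed

end
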